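(* Let $m_1,m_2,m_3\ge 1$ be integers and let $a\neq b$ be complex numbers. (a) If $T_{m_1}(a)=T_{m_1}(b)$ and $T_{m_2}(a)=T_{m_2}(b)$, then either $T_l(a)=T_l(b)$ for $l=\gcd(m_1,m_2)$, or $T_{m_1m_2}'(a)=T_{m_1m_2}'(b)=0$. (b) If $T_{m_j}(a)=T_{m_j}(b)$ for $j=1,2,3$, then there exist distinct indices $i_1,i_2\in\{1,2,3\}$ such that $T_l(a)=T_l(b)$ for $l=\gcd(m_{i_1},m_{i_2})$.
   Context: $T_n$ denotes the Chebyshev polynomial of the first kind of degree $n$, defined by $T_n(\cos\phi)=\cos(n\phi)$. *)

theory Defs
  imports "HOL-Computational_Algebra.Polynomial"
begin

text \<open>Chebyshev polynomials of the first kind, via the standard recurrence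
  T_0 = 1, T_1 = X, T_(n+2) = 2 X T_(n+1) - T_n; these are exactly the
  polynomials with T_n(cos phi) = cos(n phi).\<close>
fun cheb_T :: "nat \<Rightarrow> 'a::comm_ring_1 poly" where
  "cheb_T 0 = 1"
| "cheb_T (Suc 0) = [:0, 1:]"
| "cheb_T (Suc (Suc n)) = [:0, 2:] * cheb_T (Suc n) - cheb_T n"

end

theory Submission
  imports Defs
begin

(* Every complex number is a Joukowski image a = (u + 1/u)/2 with u \<noteq> 0,
   and then T_n(a) = (u^n + u^-n)/2.  Hence for a = J(u), b = J(v) we get
   T_n(a) = T_n(b)  iff  X^n = 1 or Y^n = 1,  where X = u/v and Y = u v.
   If two indices p, q are "of the same kind" (both roots of unity for X, or both
   for Y), then so is gcd p q, by Bezout.  This already gives part (b) by pigeonhole.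
   In the mixed case X^p = 1, Y^q = 1 of part (a), either u^2 = 1 or v^2 = 1, which
   makes X and Y of the same kind again, or u and v are both 2pq-th roots of unity
   different from \<plusminus>1; the identity (1 - x^2) T_N' = N (x T_N - T_(N+1)) then shows that
   T_(pq)' vanishes at J(u) and J(v). *)

lemma cheb_T_Suc_Suc:
  "cheb_T (Suc (Suc n)) = 2 * [:0, 1:] * cheb_T (Suc n) - (cheb_T n :: 'a::comm_ring_1 poly)"
  by (simp add: numeral_poly)

lemma pderiv_X: "pderiv [:0, 1:] = (1 :: 'a::idom poly)"
  by (simp add: pderiv_pCons)

(* The classical differential relation (1 - X^2) T_n' = n (X T_n - T_(n+1)); it is what
   lets us locate critical points of T_N. *)
lemma pderiv_cheb_T:
  "(1 - [:0, 1:] ^ 2) * pderiv (cheb_T n) =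
     of_nat n * ([:0, 1:] * cheb_T n - (cheb_T (Suc n) :: 'a::idom poly))"
proof (induction n rule: cheb_T.induct)
  case 1
  show ?case by simp
next
  case 2
  show ?case
    by (simp only: cheb_T_Suc_Suc cheb_T.simps(1,2) pderiv_X)
       (simp add: algebra_simps power2_eq_square numeral_poly)
next
  case (3 n)
  have "pderiv (cheb_T (Suc (Suc n))) =
      2 * cheb_T (Suc n) + 2 * [:0, 1:] * pderiv (cheb_T (Suc n)) - (pderiv (cheb_T n) :: 'a poly)"
    unfolding cheb_T_Suc_Suc pderiv_diff pderiv_mult pderiv_X pderiv_numeral by algebra
  with 3 show ?case
    by (simp only: cheb_T_Suc_Suc of_nat_Suc) algebra
qed

definition joukowski :: "'a::field \<Rightarrow> 'a" where
  "joukowski u = (u + inverse u) / 2"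

lemma joukowski_inverse: "joukowski (inverse u) = joukowski u"
  by (simp add: joukowski_def add.commute)

lemma joukowski_surj:
  fixes a :: complex
  obtains u where "u \<noteq> 0" "a = joukowski u"
proof -
  define s where "s = csqrt (a^2 - 1)"
  have "(a + s) * (a - s) = 1"
    using power2_csqrt[of "a^2 - 1"] by (simp add: s_def algebra_simps power2_eq_square)
  then have "a + s \<noteq> 0" and "inverse (a + s) = a - s"
    by (auto intro: inverse_unique)
  then show ?thesis
    using that[of "a + s"] by (simp add: joukowski_def)
qed

(* T_n(cos t) = cos(n t), in algebraic form. *)
lemma cheb_T_joukowski:
  fixes u :: "'a::field_char_0"
  assumes "u \<noteq> 0"
  shows "poly (cheb_T n) (joukowski u) = (u ^ n + inverse u ^ n) / 2"
proof (induction n rule: cheb_T.induct)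
  case (3 n)
  have "poly (cheb_T (Suc (Suc n))) (joukowski u)
      = (u + inverse u) * poly (cheb_T (Suc n)) (joukowski u) - poly (cheb_T n) (joukowski u)"
    by (simp add: joukowski_def)
  also have "\<dots> = (u + inverse u) * ((u ^ Suc n + inverse u ^ Suc n) / 2) - (u ^ n + inverse u ^ n) / 2"
    by (simp only: 3)
  also have "\<dots> = (u ^ Suc (Suc n) + inverse u ^ Suc (Suc n)) / 2"
    using assms by (simp add: field_simps power_Suc)
  finally show ?case .
qed (simp_all add: joukowski_def)

lemma cheb_T_joukowski_eq_iff:
  fixes u v :: "'a::field_char_0"
  assumes "u \<noteq> 0" "v \<noteq> 0"
  shows "poly (cheb_T n) (joukowski u) = poly (cheb_T n) (joukowski v)
           \<longleftrightarrow> (u / v) ^ n = 1 \<or> (u * v) ^ n = 1"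
proof -
  define p q where "p = u ^ n" and "q = v ^ n"
  have "p \<noteq> 0" "q \<noteq> 0"
    using assms by (simp_all add: p_def q_def)
  have "poly (cheb_T n) (joukowski u) = poly (cheb_T n) (joukowski v)
          \<longleftrightarrow> p + inverse p = q + inverse q"
    unfolding cheb_T_joukowski[OF assms(1)] cheb_T_joukowski[OF assms(2)] p_def q_def power_inverse
    by (simp only: divide_cancel_right) simp
  also have "\<dots> \<longleftrightarrow> (p - q) * (p * q - 1) = 0"
    using \<open>p \<noteq> 0\<close> \<open>q \<noteq> 0\<close> by (simp add: field_simps)
  also have "\<dots> \<longleftrightarrow> (u / v) ^ n = 1 \<or> (u * v) ^ n = 1"
    using \<open>q \<noteq> 0\<close> by (simp add: p_def q_def power_divide power_mult_distrib)
  finally show ?thesis .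
qed

(* If u^2 = 1 (or v^2 = 1) then u v and u/v are equal or mutually inverse, so they
   are roots of unity of the same orders. *)
lemma joukowski_degenerate_roots:
  fixes u v :: "'a::field"
  assumes "v \<noteq> 0" "u ^ 2 = 1 \<or> v ^ 2 = 1"
  shows "(u / v) ^ n = 1 \<longleftrightarrow> (u * v) ^ n = 1"
proof (cases "u ^ 2 = 1")
  case True
  then have "(u / v) * (u * v) = 1"
    using assms by (simp add: power2_eq_square)
  then have "(u / v) ^ n * (u * v) ^ n = 1"
    by (metis power_mult_distrib power_one)
  then show ?thesis
    by (metis mult_1 mult_1_right)
next
  case False
  with assms(2) have "v * v = 1"
    by (simp add: power2_eq_square)
  then have "inverse v = v"
    by (rule inverse_unique)
  then show ?thesis
    by (simp add: divide_inverse)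
qed

lemma power_gcd_eq_one:
  fixes x :: "'a::monoid_mult"
  assumes "x ^ m = 1" "x ^ n = 1"
  shows "x ^ gcd m n = 1"
proof (cases "m = 0")
  case False
  then obtain i j where "m * i = n * j + gcd m n"
    using bezout_nat by blast
  then have "x ^ (m * i) = x ^ (n * j) * x ^ gcd m n"
    by (simp add: power_add)
  then show ?thesis
    using assms by (simp add: power_mult)
qed (use assms in simp)

lemma pderiv_cheb_T_joukowski_root:
  fixes u :: "'a::field_char_0"
  assumes "u \<noteq> 0" "u ^ 2 \<noteq> 1" "u ^ (2 * N) = 1"
  shows "poly (pderiv (cheb_T N)) (joukowski u) = 0"
proof -
  define a where "a = joukowski u"
  have "u ^ N * u ^ N = 1"
    using assms(3) by (simp add: power_add[symmetric] mult_2)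
  then have inv: "inverse u ^ N = u ^ N"
    by (simp add: power_inverse inverse_unique)
  have TN: "poly (cheb_T N) a = u ^ N"
    by (simp add: a_def cheb_T_joukowski[OF assms(1)] inv)
  have "poly (cheb_T (Suc N)) a = (u * u ^ N + inverse u * u ^ N) / 2"
    by (simp add: a_def cheb_T_joukowski[OF assms(1)] inv)
  also have "\<dots> = a * poly (cheb_T N) a"
    unfolding TN by (simp add: a_def joukowski_def algebra_simps)
  finally have "poly (cheb_T (Suc N)) a = a * poly (cheb_T N) a" .
  then have "(1 - a ^ 2) * poly (pderiv (cheb_T N)) a = 0"
    using arg_cong[OF pderiv_cheb_T[of N], of "\<lambda>p. poly p a"] by simp
  moreover have "1 - a ^ 2 \<noteq> 0"
  proof
    assume "1 - a ^ 2 = 0"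
    then have "(u - inverse u) ^ 2 = 0"
      using assms(1) by (simp add: a_def joukowski_def field_simps power2_eq_square)
    then have "u * u = u * inverse u"
      by simp
    also have "\<dots> = 1"
      using assms(1) by simp
    finally have "u * u = 1" .
    with assms(2) show False
      by (simp add: power2_eq_square)
  qed
  ultimately show ?thesis
    by (simp add: a_def)
qed

lemma mixed_roots_gcd_or_critical:
  fixes u v :: "'a::field_char_0"
  assumes "u \<noteq> 0" "v \<noteq> 0" "(u / v) ^ p = 1" "(u * v) ^ q = 1"
  shows "(u / v) ^ gcd p q = 1
     \<or> (poly (pderiv (cheb_T (p * q))) (joukowski u) = 0
        \<and> poly (pderiv (cheb_T (p * q))) (joukowski v) = 0)"
proof (cases "u ^ 2 = 1 \<or> v ^ 2 = 1")
  case True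
  then have "(u / v) ^ q = 1"
    using joukowski_degenerate_roots[OF assms(2)] assms(4) by blast
  then show ?thesis
    using power_gcd_eq_one[OF assms(3)] by blast
next
  case False
  have X: "(u / v) ^ (p * q) = 1"
    using assms(3) by (simp add: power_mult)
  have Y: "(u * v) ^ (p * q) = 1"
    using assms(4) by (metis mult.commute power_mult power_one)
  have "u ^ 2 = (u / v) * (u * v)" and "v ^ 2 = (u * v) / (u / v)"
    using assms(1,2) by (simp_all add: power2_eq_square)
  then have "(u ^ 2) ^ (p * q) = 1" and "(v ^ 2) ^ (p * q) = 1"
    using X Y by (simp_all only: power_mult_distrib power_divide) simp_all
  then have "u ^ (2 * (p * q)) = 1" and "v ^ (2 * (p * q)) = 1"
    by (simp_all only: power_mult)
  then show ?thesis
    using False pderiv_cheb_T_joukowski_root assms(1,2) by blast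
qed

lemma cheb_T_coincidence_roots:
  fixes a b :: complex
  obtains u v where "u \<noteq> 0" "v \<noteq> 0" "a = joukowski u" "b = joukowski v"
    "\<And>n. poly (cheb_T n) a = poly (cheb_T n) b \<longleftrightarrow> (u / v) ^ n = 1 \<or> (u * v) ^ n = 1"
proof -
  obtain u v where "u \<noteq> 0" "v \<noteq> 0" "a = joukowski u" "b = joukowski v"
    by (metis joukowski_surj)
  with cheb_T_joukowski_eq_iff that show ?thesis
    by blast
qed

lemma cheb_T_coincidence_gcd_or_critical:
  fixes a b :: complex
  assumes "poly (cheb_T p) a = poly (cheb_T p) b" "poly (cheb_T q) a = poly (cheb_T q) b"
  shows "poly (cheb_T (gcd p q)) a = poly (cheb_T (gcd p q)) b
     \<or> (poly (pderiv (cheb_T (p * q))) a = 0 \<and> poly (pderiv (cheb_T (p * q))) b = 0)"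
proof -
  obtain u v :: complex where uv: "u \<noteq> 0" "v \<noteq> 0" "a = joukowski u" "b = joukowski v"
    and E: "\<And>n. poly (cheb_T n) a = poly (cheb_T n) b \<longleftrightarrow> (u / v) ^ n = 1 \<or> (u * v) ^ n = 1"
    using cheb_T_coincidence_roots[of a b] by metis
  have "(u / v) ^ p = 1 \<or> (u * v) ^ p = 1" "(u / v) ^ q = 1 \<or> (u * v) ^ q = 1"
    using assms E by blast+
  then consider (same) "(u / v) ^ p = 1 \<and> (u / v) ^ q = 1 \<or> (u * v) ^ p = 1 \<and> (u * v) ^ q = 1"
    | (mixed) "(u / v) ^ p = 1" "(u * v) ^ q = 1" | (mixed_swapped) "(u * v) ^ p = 1" "(u / v) ^ q = 1"
    by blast
  then show ?thesis
  proof cases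
    case same
    then have "(u / v) ^ gcd p q = 1 \<or> (u * v) ^ gcd p q = 1"
      using power_gcd_eq_one by blast
    then show ?thesis
      using E by blast
  next
    case mixed
    then show ?thesis
      using mixed_roots_gcd_or_critical[OF uv(1,2)] E uv(3,4) by blast
  next
    case mixed_swapped
    (* replacing v by 1/v keeps b = J(v) and swaps u/v with u v *)
    have "inverse v \<noteq> 0" "b = joukowski (inverse v)"
      "u / inverse v = u * v" "u * inverse v = u / v"
      using uv by (simp_all add: joukowski_inverse divide_inverse)
    with mixed_swapped show ?thesis
      using mixed_roots_gcd_or_critical[OF uv(1), of "inverse v" p q] E uv(3) by auto
  qed
qed

(* Part (b): among three coincidences two are of the same kind, so some pairwise gcd
   is again a coincidence. *)
lemma cheb_T_three_coincidences:
  fixes a b :: complex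
  assumes "poly (cheb_T p) a = poly (cheb_T p) b" "poly (cheb_T q) a = poly (cheb_T q) b"
    and "poly (cheb_T r) a = poly (cheb_T r) b"
  shows "poly (cheb_T (gcd p q)) a = poly (cheb_T (gcd p q)) b
     \<or> poly (cheb_T (gcd p r)) a = poly (cheb_T (gcd p r)) b
     \<or> poly (cheb_T (gcd q r)) a = poly (cheb_T (gcd q r)) b"
proof -
  obtain u v :: complex where
    E: "\<And>n. poly (cheb_T n) a = poly (cheb_T n) b \<longleftrightarrow> (u / v) ^ n = 1 \<or> (u * v) ^ n = 1"
    using cheb_T_coincidence_roots[of a b] by metis
  have same_kind: "poly (cheb_T (gcd m n)) a = poly (cheb_T (gcd m n)) b"
    if "(u / v) ^ m = 1 \<and> (u / v) ^ n = 1 \<or> (u * v) ^ m = 1 \<and> (u * v) ^ n = 1" for m n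
    using that power_gcd_eq_one E by blast
  have "(u / v) ^ p = 1 \<or> (u * v) ^ p = 1" "(u / v) ^ q = 1 \<or> (u * v) ^ q = 1"
    "(u / v) ^ r = 1 \<or> (u * v) ^ r = 1"
    using assms E by blast+
  then show ?thesis
    using same_kind[of p q] same_kind[of p r] same_kind[of q r] by blast
qed

theorem lemma2p1:
  fixes m1 m2 m3 :: nat and a b :: complex
  assumes "m1 \<ge> 1" and "m2 \<ge> 1" and "m3 \<ge> 1" and "a \<noteq> b"
  shows "(poly (cheb_T m1) a = poly (cheb_T m1) b \<and> poly (cheb_T m2) a = poly (cheb_T m2) b
           \<longrightarrow> poly (cheb_T (gcd m1 m2)) a = poly (cheb_T (gcd m1 m2)) b
               \<or> (poly (pderiv (cheb_T (m1 * m2))) a = 0 \<and> poly (pderiv (cheb_T (m1 * m2))) b = 0))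
       \<and> (poly (cheb_T m1) a = poly (cheb_T m1) b \<and> poly (cheb_T m2) a = poly (cheb_T m2) b
           \<and> poly (cheb_T m3) a = poly (cheb_T m3) b
           \<longrightarrow> (\<exists>i1\<in>{1::nat,2,3}. \<exists>i2\<in>{1::nat,2,3}. i1 \<noteq> i2 \<and>
                 (let m = (\<lambda>i::nat. if i = 1 then m1 else if i = 2 then m2 else m3);
                      l = gcd (m i1) (m i2)
                  in poly (cheb_T l) a = poly (cheb_T l) b)))"
  using cheb_T_coincidence_gcd_or_critical[of m1 a b m2]
    cheb_T_three_coincidences[of m1 a b m2 m3]
  by (auto simp: Let_def)

end
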